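(* If $A\in\mathfrak{B}_{n\times m}$ is a canonical matrix, then $A$ is semi-canonical.
   Context: $\mathfrak{B}_{n\times m}$ denotes the set of all $n\times m$ matrices with entries in $\{0,1\}$. For $A=[a_{ij}]\in\mathfrak{B}_{n\times m}$, $r(A)=\langle x_1,\dots,x_n\rangle$ with $x_i=\sum_{j=1}^m a_{ij}2^{m-j}$ and $c(A)=\langle y_1,\dots,y_m\rangle$ with $y_j=\sum_{i=1}^n a_{ij}2^{n-i}$; tuples are compared lexicographically. $A\sim B$ means $A=XBY$ for some permutation matrices $X$ ($n\times n$) and $Y$ ($m\times m$). $A$ is canonical if $r(A)$ is the lexicographically minimal element of $\{r(B)\mid B\sim A\}$. $A$ is semi-canonical if $x_1\le\cdots\le x_n$ and $y_1\le\cdots\le y_m$. *)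

theory Defs
  imports Main "HOL-Combinatorics.Permutations"
begin

text \<open>An n x m binary matrix is represented as a function A :: nat => nat => nat
  with 0-based indices; only entries with i < n, j < m matter, and they lie in {0,1}.\<close>

definition binmat :: "nat \<Rightarrow> nat \<Rightarrow> (nat \<Rightarrow> nat \<Rightarrow> nat) \<Rightarrow> bool" where
  "binmat n m A \<longleftrightarrow> (\<forall>i<n. \<forall>j<m. A i j \<in> {0, 1})"

text \<open>Row code x_i = sum_j a_ij 2^(m-j) (1-based j), i.e. with 0-based j: 2^(m-1-j).\<close>
definition row_code :: "nat \<Rightarrow> (nat \<Rightarrow> nat \<Rightarrow> nat) \<Rightarrow> nat \<Rightarrow> nat" where
  "row_code m A i = (\<Sum>j<m. A i j * 2 ^ (m - 1 - j))"

definition col_code :: "nat \<Rightarrow> (nat \<Rightarrow> nat \<Rightarrow> nat) \<Rightarrow> nat \<Rightarrow> nat" where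
  "col_code n A j = (\<Sum>i<n. A i j * 2 ^ (n - 1 - i))"

definition rvec :: "nat \<Rightarrow> nat \<Rightarrow> (nat \<Rightarrow> nat \<Rightarrow> nat) \<Rightarrow> nat list" where
  "rvec n m A = map (row_code m A) [0..<n]"

definition cvec :: "nat \<Rightarrow> nat \<Rightarrow> (nat \<Rightarrow> nat \<Rightarrow> nat) \<Rightarrow> nat list" where
  "cvec n m A = map (col_code n A) [0..<m]"

text \<open>A ~ B: A = X B Y for permutation matrices X, Y, i.e. A is obtained from B
  by permuting rows and columns.\<close>
definition perm_equiv :: "nat \<Rightarrow> nat \<Rightarrow> (nat \<Rightarrow> nat \<Rightarrow> nat) \<Rightarrow> (nat \<Rightarrow> nat \<Rightarrow> nat) \<Rightarrow> bool" where
  "perm_equiv n m A B \<longleftrightarrow>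
     (\<exists>p q. p permutes {..<n} \<and> q permutes {..<m} \<and>
            (\<forall>i<n. \<forall>j<m. A i j = B (p i) (q j)))"

definition lex_le :: "nat list \<Rightarrow> nat list \<Rightarrow> bool" where
  "lex_le xs ys \<longleftrightarrow> lexordp_eq xs ys"

definition canonical :: "nat \<Rightarrow> nat \<Rightarrow> (nat \<Rightarrow> nat \<Rightarrow> nat) \<Rightarrow> bool" where
  "canonical n m A \<longleftrightarrow>
     (\<forall>B. binmat n m B \<and> perm_equiv n m B A \<longrightarrow> lex_le (rvec n m A) (rvec n m B))"

definition semi_canonical :: "nat \<Rightarrow> nat \<Rightarrow> (nat \<Rightarrow> nat \<Rightarrow> nat) \<Rightarrow> bool" where
  "semi_canonical n m A \<longleftrightarrow> sorted (rvec n m A) \<and> sorted (cvec n m A)"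

end

theory Submission
  imports Defs
begin

text \<open>If two adjacent rows of a canonical matrix were out of order, swapping them would give an
  equivalent matrix with a lexicographically smaller row vector. If two adjacent columns \<open>j, j+1\<close>
  were out of order, then in the first row where they differ column \<open>j\<close> holds 1 and column
  \<open>j+1\<close> holds 0; swapping the two columns leaves all earlier rows unchanged and decreases
  that row's code, again contradicting minimality.\<close>

definition binary_value :: "nat \<Rightarrow> (nat \<Rightarrow> nat) \<Rightarrow> nat" where
  "binary_value n d = (\<Sum>t<n. d t * 2 ^ (n - 1 - t))"

lemma row_code_eq_binary_value: "row_code m A i = binary_value m (A i)"
  by (simp add: row_code_def binary_value_def)

lemma col_code_eq_binary_value: "col_code n A j = binary_value n (\<lambda>i. A i j)"
  by (simp add: col_code_def binary_value_def)

lemma binary_value_cong: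
  "(\<And>t. t < n \<Longrightarrow> u t = v t) \<Longrightarrow> binary_value n u = binary_value n v"
  unfolding binary_value_def by (intro sum.cong) auto

lemma binary_value_Suc: "binary_value (Suc n) d = 2 * binary_value n d + d n"
proof -
  have "(\<Sum>t<n. d t * 2 ^ (Suc n - 1 - t)) = (\<Sum>t<n. 2 * (d t * 2 ^ (n - 1 - t)))"
  proof (rule sum.cong)
    fix t assume "t \<in> {..<n}"
    then have "Suc n - 1 - t = Suc (n - 1 - t)" by auto
    then show "d t * 2 ^ (Suc n - 1 - t) = 2 * (d t * 2 ^ (n - 1 - t))" by simp
  qed simp
  then show ?thesis by (simp add: binary_value_def sum_distrib_left)
qed

text \<open>Only the smaller sequence needs binary digits: the larger one may carry arbitrary digits
  after position \<open>k\<close>.\<close>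

lemma binary_value_less:
  assumes "k < n" and "\<forall>t<k. u t = v t" and "u k < v k" and "\<forall>t<n. u t \<le> 1"
  shows "binary_value n u < binary_value n v"
  using assms(1,4)
proof (induction n)
  case 0
  then show ?case by simp
next
  case (Suc n)
  show ?case
  proof (cases "k = n")
    case True
    have "binary_value n u = binary_value n v"
      using assms(2) True by (intro binary_value_cong) auto
    then show ?thesis using assms(3) True by (simp add: binary_value_Suc)
  next
    case False
    with Suc.prems have "k < n" and "u n \<le> 1" by simp_all
    moreover from \<open>k < n\<close> Suc have "binary_value n u < binary_value n v" by simp
    ultimately show ?thesis by (simp add: binary_value_Suc)
  qed
qed

lemma binary_value_less_first_difference:
  assumes less: "binary_value n u < binary_value n v" and digits: "\<forall>t<n. v t \<le> 1"
  obtains k where "k < n" and "\<forall>t<k. u t = v t" and "u k < v k"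
proof -
  have "\<exists>t. t < n \<and> u t \<noteq> v t"
  proof (rule ccontr)
    assume "\<not> ?thesis"
    then have "binary_value n u = binary_value n v" by (intro binary_value_cong) blast
    with less show False by simp
  qed
  then obtain k where k: "k < n" "u k \<noteq> v k" and before: "\<forall>t<k. u t = v t"
    using exists_least_iff[where P = "\<lambda>t. t < n \<and> u t \<noteq> v t"] by force
  have "\<not> v k < u k"
  proof
    assume "v k < u k"
    then have "binary_value n v < binary_value n u"
      using k(1) before digits by (intro binary_value_less[of k]) auto
    with less show False by simp
  qed
  with k before that show ?thesis by simp
qed

lemma lexordp_map_upt:
  fixes f g :: "nat \<Rightarrow> 'a::ord"
  assumes "k < n" and "\<forall>i<k. f i = g i" and "f k < g k"
  shows "ord_class.lexordp (map f [0..<n]) (map g [0..<n])"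
proof -
  have split: "[0..<n] = [0..<k] @ k # [Suc k..<n]"
    using assms(1) by (metis le_add1 less_imp_add_positive upt_add_eq_append upt_conv_Cons add_0)
  have "map g [0..<k] = map f [0..<k]" using assms(2) by simp
  then have "map f [0..<n] = map f [0..<k] @ f k # map f [Suc k..<n]"
    and "map g [0..<n] = map f [0..<k] @ g k # map g [Suc k..<n]"
    by (simp_all add: split)
  then show ?thesis
    using assms(3) by (simp add: lexordp_append_leftI)
qed

lemma binmat_entry_le_1: "binmat n m A \<Longrightarrow> i < n \<Longrightarrow> j < m \<Longrightarrow> A i j \<le> 1"
  unfolding binmat_def by fastforce

lemma canonical_not_lexordp_permuted:
  assumes "canonical n m A" and "binmat n m A"
    and p: "p permutes {..<n}" and q: "q permutes {..<m}"
  shows "\<not> ord_class.lexordp (rvec n m (\<lambda>i j. A (p i) (q j))) (rvec n m A)"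
proof -
  let ?B = "\<lambda>i j. A (p i) (q j)"
  have "binmat n m ?B"
    using assms(2) permutes_in_image[OF p] permutes_in_image[OF q] by (auto simp: binmat_def)
  moreover have "perm_equiv n m ?B A"
    unfolding perm_equiv_def using p q by blast
  ultimately have "lex_le (rvec n m A) (rvec n m ?B)"
    using assms(1) by (auto simp: canonical_def)
  then show ?thesis
    by (meson lex_le_def lexordp_conv_lexordp_eq)
qed

lemma canonical_row_code_le_Suc:
  assumes "canonical n m A" and "binmat n m A" and "Suc i < n"
  shows "row_code m A i \<le> row_code m A (Suc i)"
proof (rule ccontr)
  assume out_of_order: "\<not> ?thesis"
  let ?p = "Transposition.transpose i (Suc i)"
  have p: "?p permutes {..<n}" using assms(3) by (intro permutes_swap_id) auto
  have "ord_class.lexordp (rvec n m (\<lambda>r c. A (?p r) (id c))) (rvec n m A)"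
    unfolding rvec_def
  proof (rule lexordp_map_upt[of i])
    show "\<forall>r<i. row_code m (\<lambda>r c. A (?p r) (id c)) r = row_code m A r"
      by (auto simp: row_code_def transpose_def)
    show "row_code m (\<lambda>r c. A (?p r) (id c)) i < row_code m A i"
      using out_of_order by (auto simp: row_code_def transpose_def)
  qed (use assms(3) in auto)
  then show False
    using canonical_not_lexordp_permuted[OF assms(1,2) p permutes_id] by (rule rev_notE)
qed

lemma canonical_col_code_le_Suc:
  assumes "canonical n m A" and "binmat n m A" and "Suc j < m"
  shows "col_code n A j \<le> col_code n A (Suc j)"
proof (rule ccontr)
  assume "\<not> ?thesis"
  then have less: "binary_value n (\<lambda>r. A r (Suc j)) < binary_value n (\<lambda>r. A r j)"
    by (simp add: col_code_eq_binary_value)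
  have "\<forall>r<n. A r j \<le> 1"
    using binmat_entry_le_1[OF assms(2)] assms(3) by simp
  with less obtain i where i: "i < n" and before: "\<forall>r<i. A r (Suc j) = A r j"
    and drop: "A i (Suc j) < A i j"
    by (rule binary_value_less_first_difference)
  let ?q = "Transposition.transpose j (Suc j)"
  let ?B = "\<lambda>r c. A (id r) (?q c)"
  have q: "?q permutes {..<m}" using assms(3) by (intro permutes_swap_id) auto
  have "ord_class.lexordp (rvec n m ?B) (rvec n m A)"
    unfolding rvec_def row_code_eq_binary_value
  proof (rule lexordp_map_upt[of i])
    show "\<forall>r<i. binary_value m (?B r) = binary_value m (A r)"
      using before by (auto intro!: binary_value_cong simp: transpose_def)
    have "\<forall>t<m. ?B i t \<le> 1"
      using binmat_entry_le_1[OF assms(2) i] permutes_in_image[OF q] by simp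
    then show "binary_value m (?B i) < binary_value m (A i)"
      using drop assms(3) by (intro binary_value_less[of j]) (auto simp: transpose_def)
  qed (use i in auto)
  then show False
    using canonical_not_lexordp_permuted[OF assms(1,2) permutes_id q] by (rule rev_notE)
qed

theorem corollary2:
  fixes n m :: nat and A :: "nat \<Rightarrow> nat \<Rightarrow> nat"
  assumes "binmat n m A" and "canonical n m A"
  shows "semi_canonical n m A"
proof -
  have "sorted (map (row_code m A) [0..<n])"
    using canonical_row_code_le_Suc[OF assms(2,1)] by (simp add: sorted_iff_nth_Suc)
  moreover have "sorted (map (col_code n A) [0..<m])"
    using canonical_col_code_le_Suc[OF assms(2,1)] by (simp add: sorted_iff_nth_Suc)
  ultimately show ?thesis
    by (simp add: semi_canonical_def rvec_def cvec_def)
qed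

end
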